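(* Let $\Sigma_\pm\subset\mathbb C^3_{(B,A,r)}$ be the set of parameters for which the monodromy $\mathrm{Mon}$ fixes the point $\pm i$. Then $\Sigma_\pm$ consists exactly of those parameters for which $\mathrm{Mon}$ is a parabolic or identical Möbius transformation fixing $\pm i$. Moreover, every parameter $(B,A,r)$ for which $\mathrm{Mon}$ is parabolic or the identity lies in $\Sigma_+\cup\Sigma_-$.
   Context: For complex parameters $(B,A,r)$ with $r\neq0$ set $\omega=\frac1{2r}$, $l=2Br$, $\mu=Ar$, and consider the Riccati equation $\frac{d\Phi}{dz}=z^{-2}\left((lz+\mu(z^2+1))\Phi-\frac{z}{2i\omega}(\Phi^2-1)\right)$ on the Riemann sphere, $z\in\mathbb C^*$. It is the projectivization of a linear system, so its monodromy transformation $\mathrm{Mon}$, acting on initial conditions $\Phi(1)\in\overline{\mathbb C}$ by analytic continuation of solutions along the positively oriented unit circle in the $z$-line, is a Möbius transformation of the Riemann sphere. A Möbius transformation is parabolic if it is not the identity and has exactly one fixed point. *)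

theory Defs
  imports "HOL-Analysis.Analysis"
begin

text \<open>The Riccati equation
    dPhi/dz = z^-2 ((l z + mu (z^2+1)) Phi - z/(2 i omega) (Phi^2 - 1))
  is the projectivization Phi = Y1/Y2 of the linear system Y' = M(z) Y with
    M11 = (l z + mu (z^2+1))/z^2,  M12 = 1/(2 i omega z),
    M21 = 1/(2 i omega z),         M22 = 0,
  since (Y1/Y2)' = M12 + (M11 - M22) Phi - M21 Phi^2.\<close>

definition omega_par :: "complex \<Rightarrow> complex" where
  "omega_par r = 1 / (2 * r)"

definition l_par :: "complex \<Rightarrow> complex \<Rightarrow> complex" where
  "l_par B r = 2 * B * r"

definition mu_par :: "complex \<Rightarrow> complex \<Rightarrow> complex" where
  "mu_par A r = A * r"

definition lin_matrix :: "complex \<Rightarrow> complex \<Rightarrow> complex \<Rightarrow> complex \<Rightarrow> complex^2^2" where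
  "lin_matrix B A r z =
     (let l = l_par B r; \<mu> = mu_par A r; \<omega> = omega_par r;
          q = 1 / (2 * \<i> * \<omega> * z)
      in vector [vector [(l * z + \<mu> * (z^2 + 1)) / z^2, q], vector [q, 0]])"

definition unit_circle :: "real \<Rightarrow> complex" where
  "unit_circle t = exp (2 * pi * \<i> * complex_of_real t)"

definition is_fund_sol :: "complex \<Rightarrow> complex \<Rightarrow> complex \<Rightarrow> (real \<Rightarrow> complex^2^2) \<Rightarrow> bool" where
  "is_fund_sol B A r X \<longleftrightarrow>
     X 0 = mat 1 \<and>
     (\<forall>t\<in>{0..1}. (X has_vector_derivative
         (mat (2 * pi * \<i> * unit_circle t) ** lin_matrix B A r (unit_circle t) ** X t))
        (at t within {0..1}))"

definition monodromy_matrix :: "complex \<Rightarrow> complex \<Rightarrow> complex \<Rightarrow> complex^2^2" where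
  "monodromy_matrix B A r = (THE M. \<exists>X. is_fund_sol B A r X \<and> X 1 = M)"

text \<open>The Riemann sphere as complex option (None = infinity) and the Moebius
  transformation induced by a 2x2 matrix.\<close>
definition moebius_app :: "complex^2^2 \<Rightarrow> complex option \<Rightarrow> complex option" where
  "moebius_app N p =
     (let a = N $ 1 $ 1; b = N $ 1 $ 2; c = N $ 2 $ 1; d = N $ 2 $ 2 in
      case p of
        None \<Rightarrow> (if c = 0 then None else Some (a / c))
      | Some w \<Rightarrow> (if c * w + d = 0 then None else Some ((a * w + b) / (c * w + d))))"

text \<open>Monodromy transformation Mon acting on initial conditions Phi(1).\<close>
definition Mon :: "complex \<Rightarrow> complex \<Rightarrow> complex \<Rightarrow> complex option \<Rightarrow> complex option" where
  "Mon B A r = moebius_app (monodromy_matrix B A r)"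

definition parabolic :: "(complex option \<Rightarrow> complex option) \<Rightarrow> bool" where
  "parabolic f \<longleftrightarrow> f \<noteq> id \<and> (\<exists>!p. f p = p)"

definition Sigma_pm :: "complex \<Rightarrow> (complex \<times> complex \<times> complex) set" where
  "Sigma_pm s = {(B, A, r). r \<noteq> 0 \<and> Mon B A r (Some (s * \<i>)) = Some (s * \<i>)}"

end

theory Submission
  imports Defs
begin

text \<open>
  The monodromy matrix \<open>M\<close> is symmetric, and its determinant is nonzero by Liouville's
  formula. For symmetry, note that the coefficient matrix \<open>F t\<close> of the
  system along \<open>z = exp (2 \<pi> \<i> t)\<close> is symmetric and invariant under \<open>t \<mapsto> 1 - t\<close>, i.e.
  \<open>z \<mapsto> 1/z\<close>. A symmetric \<open>2 \<times> 2\<close> matrix satisfies \<open>F J = J (tr F - F)\<close> for the rotation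
  \<open>J\<close> by a right angle, so with \<open>\<phi>' = tr F \<phi>\<close> the function \<open>\<phi>(t) J X(1 - t)\<close> is again a
  solution. Comparing it with \<open>X(t) J M\<close> gives \<open>M J M = \<phi>(1) J = det M J\<close>, which forces
  \<open>M\<^sup>T = M\<close>.

  For symmetric \<open>N = [[a, b], [b, d]]\<close> the finite fixed points of the Moebius map are the
  roots of \<open>b z\<^sup>2 + (d - a) z - b\<close>, a root set invariant under \<open>z \<mapsto> -1/z\<close>. A fixed point
  \<open>\<plusminus>\<i>\<close> is therefore a double root, so the map is parabolic (or the identity when \<open>b = 0\<close>);
  conversely a unique fixed point \<open>z\<close> satisfies \<open>z = -1/z\<close>, i.e. \<open>z = \<plusminus>\<i>\<close>.
\<close>

section \<open>Linear matrix differential equations on [0,1]\<close>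

lemma bounded_bilinear_matrix_matrix_mult:
  "bounded_bilinear ((**) :: complex^'n^'n \<Rightarrow> complex^'n^'n \<Rightarrow> complex^'n^'n)"
proof -
  have "(A + B) ** C = A ** C + B ** C" for A B C :: "complex^'n^'n"
    by (simp add: matrix_matrix_mult_def vec_eq_iff distrib_right sum.distrib)
  then show ?thesis
    unfolding bilinear_conv_bounded_bilinear[symmetric] bilinear_def
    by (auto intro!: linearI simp: matrix_add_ldistrib matrix_scalar_ac scalar_matrix_assoc)
qed

interpretation matrix_mult: bounded_bilinear "(**) :: complex^'n^'n \<Rightarrow> complex^'n^'n \<Rightarrow> complex^'n^'n"
  by (rule bounded_bilinear_matrix_matrix_mult)

definition solves_linear_ode :: "(real \<Rightarrow> complex^'n^'n) \<Rightarrow> (real \<Rightarrow> complex^'n^'n) \<Rightarrow> bool" where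
  "solves_linear_ode F X \<longleftrightarrow>
     (\<forall>t\<in>{0..1}. (X has_vector_derivative F t ** X t) (at t within {0..1}))"

lemma continuous_on_matrix_mult_bound:
  fixes F :: "real \<Rightarrow> complex^'n^'n"
  assumes "continuous_on {0..1} F"
  obtains K where "K \<ge> 0" "\<And>s B. s \<in> {0..1} \<Longrightarrow> norm (F s ** (B::complex^'n^'n)) \<le> K * norm B"
proof -
  obtain b where b: "\<forall>s\<in>{0..1}. norm (F s) \<le> b"
    using compact_imp_bounded[OF compact_continuous_image[OF assms compact_Icc]]
    by (auto simp: bounded_iff)
  obtain K where K: "K > 0"
    "\<And>A B. norm ((A::complex^'n^'n) ** (B::complex^'n^'n)) \<le> norm A * norm B * K"
    using matrix_mult.pos_bounded by blast
  have "b \<ge> 0" using b[rule_format, of 0] by (simp add: order_trans[OF norm_ge_zero])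
  show ?thesis
  proof
    show "b * K \<ge> 0" using \<open>b \<ge> 0\<close> K by simp
    fix s :: real and B :: "complex^'n^'n" assume "s \<in> {0..1}"
    then have "norm (F s) * norm B * K \<le> b * norm B * K"
      using b K by (intro mult_right_mono) auto
    then show "norm (F s ** B) \<le> b * K * norm B"
      using K(2)[of "F s" B] by (simp add: mult_ac)
  qed
qed

lemma has_integral_power_over_fact:
  assumes "0 \<le> t"
  shows "((\<lambda>s. s^n / fact n) has_integral t^Suc n / fact (Suc n)) {0..t::real}"
proof -
  have "((\<lambda>s. s^Suc n / fact (Suc n)) has_real_derivative s^n / fact n) (at s within {0..t})" for s
    using DERIV_cdivide[OF DERIV_pow[of "Suc n" s], of "fact (Suc n)"]
    by (simp add: fact_Suc has_field_derivative_at_within del: of_nat_Suc)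
  from fundamental_theorem_of_calculus[OF assms, of "\<lambda>s. s^Suc n / fact (Suc n)"] this
  show ?thesis by (simp add: has_real_derivative_iff_has_vector_derivative)
qed

lemma norm_integral_matrix_mult_le:
  fixes F G :: "real \<Rightarrow> complex^'n^'n"
  assumes F: "continuous_on {0..1} F"
    and K: "\<And>s B. s \<in> {0..1} \<Longrightarrow> norm (F s ** (B::complex^'n^'n)) \<le> K * norm B"
    and "K \<ge> 0" and G: "continuous_on {0..1} G"
    and G_le: "\<And>s. s \<in> {0..1} \<Longrightarrow> norm (G s) \<le> c * s^n / fact n" and t: "t \<in> {0..1}"
  shows "norm (integral {0..t} (\<lambda>s. F s ** G s)) \<le> K * c * t^Suc n / fact (Suc n)"
proof -
  have sub: "{0..t} \<subseteq> {0..1}" using t by auto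
  have I: "((\<lambda>s. K * c * (s^n / fact n)) has_integral K * c * (t^Suc n / fact (Suc n))) {0..t}"
    using has_integral_mult_right[OF has_integral_power_over_fact[of t n], of "K * c"] t by simp
  have "norm (integral {0..t} (\<lambda>s. F s ** G s)) \<le> integral {0..t} (\<lambda>s. K * c * (s^n / fact n))"
  proof (rule integral_norm_bound_integral)
    show "(\<lambda>s. F s ** G s) integrable_on {0..t}"
      using continuous_on_subset[OF matrix_mult.continuous_on[OF F G] sub]
      by (rule integrable_continuous_interval)
    show "(\<lambda>s. K * c * (s^n / fact n)) integrable_on {0..t}"
      using I by (rule has_integral_integrable)
    fix s assume "s \<in> {0..t}"
    with sub have s: "s \<in> {0..1}" by blast
    have "norm (F s ** G s) \<le> K * norm (G s)" using K[OF s] .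
    also have "\<dots> \<le> K * (c * s^n / fact n)" using mult_left_mono[OF G_le[OF s] \<open>K \<ge> 0\<close>] .
    finally show "norm (F s ** G s) \<le> K * c * (s^n / fact n)" by simp
  qed
  then show ?thesis using integral_unique[OF I] by simp
qed

lemma solves_linear_ode_continuous:
  "solves_linear_ode F X \<Longrightarrow> continuous_on {0..1} X"
  unfolding solves_linear_ode_def by (rule continuous_on_vector_derivative) blast

lemma solves_linear_ode_integral_eq:
  assumes "solves_linear_ode F X" and t: "t \<in> {0..1}"
  shows "X t = X 0 + integral {0..t} (\<lambda>s. F s ** X s)"
proof -
  have "(X has_vector_derivative F s ** X s) (at s within {0..t})" if "s \<in> {0..t}" for s
  proof (rule has_vector_derivative_within_subset)
    show "(X has_vector_derivative F s ** X s) (at s within {0..1})"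
      using assms(1) that t unfolding solves_linear_ode_def by auto
  qed (use t in auto)
  then have "((\<lambda>s. F s ** X s) has_integral X t - X 0) {0..t}"
    using t by (intro fundamental_theorem_of_calculus) auto
  then show ?thesis by (simp add: integral_unique)
qed

lemma solves_linear_ode_if_integral_eq:
  fixes F X :: "real \<Rightarrow> complex^'n^'n"
  assumes F: "continuous_on {0..1} F" and X: "continuous_on {0..1} X"
    and X_eq: "\<And>t. t \<in> {0..1} \<Longrightarrow> X t = X 0 + integral {0..t} (\<lambda>s. F s ** X s)"
  shows "solves_linear_ode F X"
  unfolding solves_linear_ode_def
proof
  fix t :: real assume t: "t \<in> {0..1}"
  have "((\<lambda>t. X 0 + integral {0..t} (\<lambda>s. F s ** X s)) has_vector_derivative F t ** X t)
      (at t within {0..1})"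
    using integral_has_vector_derivative[OF matrix_mult.continuous_on[OF F X] t]
    by (auto intro: derivative_eq_intros)
  from has_vector_derivative_transform[OF t X_eq this]
  show "(X has_vector_derivative F t ** X t) (at t within {0..1})" .
qed

lemma solves_linear_ode_diff:
  "solves_linear_ode F X \<Longrightarrow> solves_linear_ode F Y \<Longrightarrow> solves_linear_ode F (\<lambda>t. X t - Y t)"
  unfolding solves_linear_ode_def matrix_mult.diff_right by (auto intro: derivative_intros)

lemma solves_linear_ode_mult_right:
  assumes "solves_linear_ode F X"
  shows "solves_linear_ode F (\<lambda>t. X t ** C)"
  using matrix_mult.bounded_linear_left[THEN bounded_linear.has_vector_derivative] assms
  unfolding solves_linear_ode_def by (fastforce simp: matrix_mul_assoc)

lemma tendsto_power_over_fact_0: "(\<lambda>n. c * x^n / fact n :: real) \<longlonglongrightarrow> 0"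
proof -
  have "(\<lambda>n. inverse (fact n) * x^n) \<longlonglongrightarrow> 0"
    by (rule summable_LIMSEQ_zero[OF summable_exp])
  from tendsto_mult_left[OF this, of c] show ?thesis by (simp add: field_simps)
qed

lemma solves_linear_ode_eq_0:
  fixes F D :: "real \<Rightarrow> complex^'n^'n"
  assumes F: "continuous_on {0..1} F" and D: "solves_linear_ode F D" and D0: "D 0 = 0"
    and t: "t \<in> {0..1}"
  shows "D t = 0"
proof -
  obtain K where K0: "K \<ge> 0"
    and K: "\<And>s B. s \<in> {0..1} \<Longrightarrow> norm (F s ** (B::complex^'n^'n)) \<le> K * norm B"
    using continuous_on_matrix_mult_bound[OF F] by blast
  have D_cont: "continuous_on {0..1} D" using D by (rule solves_linear_ode_continuous)
  obtain C where C: "\<forall>s\<in>{0..1}. norm (D s) \<le> C"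
    using compact_imp_bounded[OF compact_continuous_image[OF D_cont compact_Icc]]
    by (auto simp: bounded_iff)
  have "norm (D s) \<le> C * K^n * s^n / fact n" if "s \<in> {0..1}" for n s
    using that
  proof (induction n arbitrary: s)
    case 0
    then show ?case using C by simp
  next
    case (Suc n)
    have "norm (D s) = norm (integral {0..s} (\<lambda>u. F u ** D u))"
      using solves_linear_ode_integral_eq[OF D Suc.prems] D0 by simp
    also have "\<dots> \<le> K * (C * K^n) * s^Suc n / fact (Suc n)"
      using Suc by (intro norm_integral_matrix_mult_le[OF F K K0 D_cont]) auto
    finally show ?case by (simp add: mult_ac)
  qed
  then have "norm (D t) \<le> C * (K * t)^n / fact n" for n
    using t by (simp only: power_mult_distrib mult.assoc)
  then have "norm (D t) \<le> 0"
    by (intro LIMSEQ_le_const[OF tendsto_power_over_fact_0]) blast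
  then show ?thesis by simp
qed

lemma linear_ode_unique:
  fixes F X Y :: "real \<Rightarrow> complex^'n^'n"
  assumes "continuous_on {0..1} F" "solves_linear_ode F X" "solves_linear_ode F Y" "X 0 = Y 0"
    and "t \<in> {0..1}"
  shows "X t = Y t"
  using solves_linear_ode_eq_0[OF assms(1) solves_linear_ode_diff[OF assms(2,3)]] assms(4,5)
  by simp

primrec peano_baker_term :: "(real \<Rightarrow> complex^'n^'n) \<Rightarrow> nat \<Rightarrow> real \<Rightarrow> complex^'n^'n" where
  "peano_baker_term F 0 = (\<lambda>t. mat 1)"
| "peano_baker_term F (Suc n) = (\<lambda>t. integral {0..t} (\<lambda>s. F s ** peano_baker_term F n s))"

lemma continuous_on_peano_baker_term:
  assumes "continuous_on {0..1} F"
  shows "continuous_on {0..1} (peano_baker_term F n)"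
proof (induction n)
  case (Suc n)
  then show ?case
    by (simp only: peano_baker_term.simps)
      (rule indefinite_integral_continuous_1[OF integrable_continuous_interval[OF
          matrix_mult.continuous_on[OF assms Suc]]])
qed simp

lemma norm_peano_baker_term_le:
  fixes F :: "real \<Rightarrow> complex^'n^'n"
  assumes F: "continuous_on {0..1} F"
    and K: "\<And>s B. s \<in> {0..1} \<Longrightarrow> norm (F s ** (B::complex^'n^'n)) \<le> K * norm B" and "K \<ge> 0"
    and t: "t \<in> {0..1}"
  shows "norm (peano_baker_term F n t) \<le> norm (mat 1 :: complex^'n^'n) * K^n * t^n / fact n"
  using t
proof (induction n arbitrary: t)
  case 0
  then show ?case by simp
next
  case (Suc n)
  have "norm (peano_baker_term F (Suc n) t)
      \<le> K * (norm (mat 1 :: complex^'n^'n) * K^n) * t^Suc n / fact (Suc n)"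
    using Suc by (simp only: peano_baker_term.simps)
      (rule norm_integral_matrix_mult_le[OF F K \<open>K \<ge> 0\<close> continuous_on_peano_baker_term[OF F]])
  then show ?case by (simp add: mult_ac)
qed

lemma uniform_limit_peano_baker_series:
  fixes F :: "real \<Rightarrow> complex^'n^'n"
  assumes F: "continuous_on {0..1} F"
  shows "uniform_limit {0..1} (\<lambda>n t. \<Sum>k<n. peano_baker_term F k t)
           (\<lambda>t. \<Sum>k. peano_baker_term F k t) sequentially"
proof -
  obtain K where "K \<ge> 0" and K: "\<And>s B. s \<in> {0..1} \<Longrightarrow> norm (F s ** (B::complex^'n^'n)) \<le> K * norm B"
    using continuous_on_matrix_mult_bound[OF F] by blast
  define c where "c = norm (mat 1 :: complex^'n^'n)"
  show ?thesis
  proof (rule Weierstrass_m_test)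
    show "summable (\<lambda>n. c * K^n / fact n)"
      using summable_mult[OF summable_exp[of K], of c] by (simp add: field_simps)
    fix n :: nat and t :: real assume t: "t \<in> {0..1}"
    have "norm (peano_baker_term F n t) \<le> c * K^n * t^n / fact n"
      unfolding c_def by (rule norm_peano_baker_term_le[OF F K \<open>K \<ge> 0\<close> t])
    also have "\<dots> \<le> c * K^n * 1 / fact n"
      using t \<open>K \<ge> 0\<close> by (intro divide_right_mono mult_left_mono power_le_one) (auto simp: c_def)
    finally show "norm (peano_baker_term F n t) \<le> c * K^n / fact n" by simp
  qed
qed

lemma peano_baker_partial_sum_Suc:
  fixes F :: "real \<Rightarrow> complex^'n^'n"
  assumes F: "continuous_on {0..1} F" and t: "t \<in> {0..1}"
  shows "(\<Sum>k<Suc n. peano_baker_term F k t)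
           = mat 1 + integral {0..t} (\<lambda>s. F s ** (\<Sum>k<n. peano_baker_term F k s))"
proof -
  have "{0..t} \<subseteq> {0..1}" using t by auto
  then have "(\<lambda>s. F s ** peano_baker_term F k s) integrable_on {0..t}" for k
    by (intro integrable_continuous_interval continuous_on_subset[OF
          matrix_mult.continuous_on[OF F continuous_on_peano_baker_term[OF F]]])
  then show ?thesis
    by (simp add: sum.lessThan_Suc_shift matrix_mult.sum_right integral_sum del: sum.lessThan_Suc)
qed

lemma tendsto_integral_matrix_mult:
  fixes F X :: "real \<Rightarrow> complex^'n^'n" and P :: "nat \<Rightarrow> real \<Rightarrow> complex^'n^'n"
  assumes F: "continuous_on {0..1} F" and P: "\<And>n. continuous_on {0..1} (P n)"
    and lim: "uniform_limit {0..1} P X sequentially" and t: "t \<in> {0..1}"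
  shows "(\<lambda>n. integral {0..t} (\<lambda>s. F s ** P n s)) \<longlonglongrightarrow> integral {0..t} (\<lambda>s. F s ** X s)"
proof -
  have sub: "{0..t} \<subseteq> {0..1}" using t by auto
  have X: "continuous_on {0..1} X"
    by (rule uniform_limit_theorem[OF _ lim]) (use P in auto)
  have bounded: "bounded (G ` {0..1})" if "continuous_on {0..1} G" for G :: "real \<Rightarrow> complex^'n^'n"
    using compact_imp_bounded[OF compact_continuous_image[OF that compact_Icc]] .
  have "uniform_limit {0..1} (\<lambda>n s. F s ** P n s) (\<lambda>s. F s ** X s) sequentially"
    using matrix_mult.bounded_uniform_limit[where f="\<lambda>n. F" and l=F and g=P and m=X,
        OF uniform_limit_const lim bounded[OF X] bounded[OF F]] .
  then have "uniform_limit {0..t} (\<lambda>n s. F s ** P n s) (\<lambda>s. F s ** X s) sequentially"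
    using sub by (rule uniform_limit_on_subset)
  then obtain I J where I: "\<And>n. ((\<lambda>s. F s ** P n s) has_integral I n) {0..t}"
    and J: "((\<lambda>s. F s ** X s) has_integral J) {0..t}" and "I \<longlonglongrightarrow> J"
    by (rule uniform_limit_integral)
      (auto intro: continuous_on_subset[OF matrix_mult.continuous_on[OF F P] sub])
  then show ?thesis using integral_unique[OF I] integral_unique[OF J] by simp
qed

lemma linear_ode_fundamental_solution_exists:
  fixes F :: "real \<Rightarrow> complex^'n^'n"
  assumes F: "continuous_on {0..1} F"
  shows "\<exists>X. X 0 = mat 1 \<and> solves_linear_ode F X"
proof -
  define S where "S n t = (\<Sum>k<n. peano_baker_term F k t)" for n t
  define X where "X t = (\<Sum>k. peano_baker_term F k t)" for t
  have S: "continuous_on {0..1} (S n)" for n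
    unfolding S_def by (intro continuous_on_sum continuous_on_peano_baker_term[OF F])
  have lim: "uniform_limit {0..1} S X sequentially"
    unfolding S_def[abs_def] X_def[abs_def] by (rule uniform_limit_peano_baker_series[OF F])
  have X_eq: "X t = mat 1 + integral {0..t} (\<lambda>s. F s ** X s)" if t: "t \<in> {0..1}" for t
  proof (rule LIMSEQ_unique)
    show "(\<lambda>n. S (Suc n) t) \<longlonglongrightarrow> X t"
      using tendsto_uniform_limitI[OF lim t] by (rule LIMSEQ_Suc)
    show "(\<lambda>n. S (Suc n) t) \<longlonglongrightarrow> mat 1 + integral {0..t} (\<lambda>s. F s ** X s)"
      unfolding S_def peano_baker_partial_sum_Suc[OF F t]
      by (intro tendsto_add tendsto_const
          tendsto_integral_matrix_mult[OF F S lim t, unfolded S_def])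
  qed
  have "X 0 = mat 1" using X_eq[of 0] by simp
  moreover have "solves_linear_ode F X"
  proof (rule solves_linear_ode_if_integral_eq[OF F])
    show "continuous_on {0..1} X" by (rule uniform_limit_theorem[OF _ lim]) (use S in auto)
  qed (use X_eq \<open>X 0 = mat 1\<close> in auto)
  ultimately show ?thesis by blast
qed

section \<open>Symmetric reversible 2 \<times> 2 systems\<close>

lemma matrix2_eqI:
  assumes "M$1$1 = N$1$1" "M$1$2 = N$1$2" "M$2$1 = N$2$1" "M$2$2 = N$2$2"
  shows "(M::'a^2^2) = N"
  using assms unfolding vec_eq_iff forall_2 by blast

lemma matrix2_mult_entry: "((A::'a::semiring_1^2^2) ** B) $ i $ j = A$i$1 * B$1$j + A$i$2 * B$2$j"
  by (simp add: matrix_matrix_mult_def sum_2)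

lemma trace2: "trace (A::'a::semiring_1^2^2) = A$1$1 + A$2$2"
  by (simp add: trace_def sum_2)

lemma mat2_entries [simp]:
  "(mat c :: 'a::zero^2^2) $ 1 $ 1 = c" "(mat c :: 'a^2^2) $ 1 $ 2 = 0"
  "(mat c :: 'a^2^2) $ 2 $ 1 = 0" "(mat c :: 'a^2^2) $ 2 $ 2 = c"
  by (simp_all add: mat_def)

lemma transpose2_eq_iff: "transpose (A::'a^2^2) = A \<longleftrightarrow> A$1$2 = A$2$1"
  by (auto simp: transpose_def vec_eq_iff forall_2)

definition J2 :: "'a::comm_ring_1^2^2" where
  "J2 = vector [vector [0, -1], vector [1, 0]]"

lemma J2_entries [simp]: "J2$1$1 = 0" "J2$1$2 = -1" "J2$2$1 = 1" "J2$2$2 = 0"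
  by (simp_all add: J2_def)

lemma symmetric2_if_mult_J2_eq:
  fixes X :: "'a::idom^2^2"
  assumes "X ** (J2 ** X) = mat (det X) ** J2"
  shows "transpose X = X"
proof -
  have "(X ** (J2 ** X)) $ i $ j = (mat (det X) ** J2) $ i $ j" for i j
    using assms by simp
  from this[of 1 2] this[of 2 1] have "(X$1$2 - X$2$1)^2 = 0"
    unfolding matrix2_mult_entry J2_entries mat2_entries det_2 by algebra
  then show ?thesis by (simp add: transpose2_eq_iff)
qed

lemma bounded_linear_mat: "bounded_linear (mat :: complex \<Rightarrow> complex^'n^'n)"
  unfolding linear_conv_bounded_linear[symmetric]
  by (rule linearI) (simp_all add: mat_def vec_eq_iff)

definition liouville_factor :: "(real \<Rightarrow> complex^'n^'n) \<Rightarrow> real \<Rightarrow> complex" where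
  "liouville_factor F t = exp (integral {0..t} (\<lambda>s. trace (F s)))"

lemma liouville_factor_0 [simp]: "liouville_factor F 0 = 1"
  by (simp add: liouville_factor_def)

lemma liouville_factor_nonzero: "liouville_factor F t \<noteq> 0"
  by (simp add: liouville_factor_def)

lemma continuous_on_trace:
  fixes F :: "real \<Rightarrow> complex^'n^'n"
  shows "continuous_on S F \<Longrightarrow> continuous_on S (\<lambda>s. trace (F s))"
  unfolding trace_def by (intro continuous_intros)

lemma integral_trace_has_vector_derivative:
  fixes F :: "real \<Rightarrow> complex^'n^'n"
  assumes "continuous_on {0..1} F" and "t \<in> {0..1}"
  shows "((\<lambda>t. integral {0..t} (\<lambda>s. trace (F s))) has_vector_derivative trace (F t))
           (at t within {0..1})"
  by (rule integral_has_vector_derivative[OF continuous_on_trace[OF assms(1)] assms(2)])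

lemma liouville_factor_has_vector_derivative:
  assumes "continuous_on {0..1} F" and "t \<in> {0..1}"
  shows "(liouville_factor F has_vector_derivative trace (F t) * liouville_factor F t)
           (at t within {0..1})"
  using field_vector_diff_chain_within[OF integral_trace_has_vector_derivative[OF assms]
      DERIV_exp[THEN has_field_derivative_at_within]]
  by (simp add: liouville_factor_def[abs_def] o_def)

lemma solves_linear_ode_entry:
  assumes "solves_linear_ode F X" and "t \<in> {0..1}"
  shows "((\<lambda>t. X t $ i $ j) has_vector_derivative (F t ** X t) $ i $ j) (at t within {0..1})"
  using bounded_linear_compose[OF bounded_linear_vec_nth bounded_linear_vec_nth,
      THEN bounded_linear.has_vector_derivative] assms
  unfolding solves_linear_ode_def by blast

lemma solves_linear_ode_det2:
  fixes F X :: "real \<Rightarrow> complex^2^2"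
  assumes X: "solves_linear_ode F X" and t: "t \<in> {0..1}"
  shows "((\<lambda>t. det (X t)) has_vector_derivative trace (F t) * det (X t)) (at t within {0..1})"
proof -
  have "((\<lambda>t. X t$1$1 * X t$2$2 - X t$1$2 * X t$2$1) has_vector_derivative
      X t$1$1 * (F t ** X t)$2$2 + (F t ** X t)$1$1 * X t$2$2
      - (X t$1$2 * (F t ** X t)$2$1 + (F t ** X t)$1$2 * X t$2$1)) (at t within {0..1})"
    by (intro has_vector_derivative_diff has_vector_derivative_mult solves_linear_ode_entry[OF X t])
  then show ?thesis
    by (simp add: det_2 trace2 matrix2_mult_entry algebra_simps)
qed

lemma det_solves_linear_ode2:
  fixes F X :: "real \<Rightarrow> complex^2^2"
  assumes F: "continuous_on {0..1} F" and X: "solves_linear_ode F X" and t: "t \<in> {0..1}"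
  shows "det (X t) = liouville_factor F t * det (X 0)"
proof -
  define I where "I t = integral {0..t} (\<lambda>s. trace (F s))" for t
  define h where "h t = det (X t) * exp (- I t)" for t
  have "(h has_vector_derivative 0) (at s within {0..1})" if s: "s \<in> {0..1}" for s
  proof -
    have "((\<lambda>t. exp (- I t)) has_vector_derivative - trace (F s) * exp (- I s))
        (at s within {0..1})"
      using field_vector_diff_chain_within[OF
          has_vector_derivative_minus[OF integral_trace_has_vector_derivative[OF F s]]
          DERIV_exp[THEN has_field_derivative_at_within]]
      by (simp add: I_def o_def)
    from has_vector_derivative_mult[OF solves_linear_ode_det2[OF X s] this]
    show ?thesis unfolding h_def[abs_def] by (simp add: algebra_simps)
  qed
  then obtain c where "\<And>s. s \<in> {0..1} \<Longrightarrow> h s = c"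
    by (rule has_vector_derivative_zero_constant[OF convex_real_interval(5)]) blast+
  from this[OF t] this[of 0] have "h t = h 0" by simp
  then show ?thesis
    by (simp add: h_def I_def liouville_factor_def exp_minus field_simps)
qed

lemma solves_linear_ode_reflect:
  fixes F X :: "real \<Rightarrow> complex^2^2"
  assumes F: "continuous_on {0..1} F"
    and sym: "\<And>t. t \<in> {0..1} \<Longrightarrow> transpose (F t) = F t"
    and rev: "\<And>t. t \<in> {0..1} \<Longrightarrow> F (1 - t) = F t"
    and X: "solves_linear_ode F X"
  shows "solves_linear_ode F (\<lambda>t. mat (liouville_factor F t) ** (J2 ** X (1 - t)))"
  unfolding solves_linear_ode_def
proof
  fix t :: real assume t: "t \<in> {0..1}"
  have t': "1 - t \<in> {0..1}" and image: "(\<lambda>t. 1 - t) ` {0..1} = {0..1::real}"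
    using t by (auto simp: image_iff intro!: bexI[where x="1 - _"])
  have "((\<lambda>t. 1 - t) has_vector_derivative -1) (at t within {0..1})"
    by (auto intro!: derivative_eq_intros)
  moreover have "(X has_vector_derivative F (1 - t) ** X (1 - t)) (at (1 - t) within {0..1})"
    using X t' unfolding solves_linear_ode_def by blast
  ultimately have "((\<lambda>t. X (1 - t)) has_vector_derivative - (F t ** X (1 - t)))
      (at t within {0..1})"
    using vector_diff_chain_within[of "\<lambda>t. 1 - t"] image rev[OF t] by (fastforce simp: o_def)
  from matrix_mult.has_vector_derivative[OF
      bounded_linear_mat[THEN bounded_linear.has_vector_derivative,
        OF liouville_factor_has_vector_derivative[OF F t]]
      matrix_mult.bounded_linear_right[THEN bounded_linear.has_vector_derivative, OF this]]
  have "((\<lambda>t. mat (liouville_factor F t) ** (J2 ** X (1 - t))) has_vector_derivative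
      mat (liouville_factor F t) ** (J2 ** - (F t ** X (1 - t)))
        + mat (trace (F t) * liouville_factor F t) ** (J2 ** X (1 - t))) (at t within {0..1})" .
  moreover
  \<comment> \<open>for symmetric 2x2 matrices, \<open>F ** J2 = J2 ** (mat (trace F) - F)\<close>\<close>
  have "mat (liouville_factor F t) ** (J2 ** - (F t ** X (1 - t)))
        + mat (trace (F t) * liouville_factor F t) ** (J2 ** X (1 - t))
      = F t ** (mat (liouville_factor F t) ** (J2 ** X (1 - t)))"
    using sym[OF t] unfolding transpose2_eq_iff
    by (intro matrix2_eqI) (simp_all add: matrix2_mult_entry trace2 algebra_simps)
  ultimately show "((\<lambda>t. mat (liouville_factor F t) ** (J2 ** X (1 - t))) has_vector_derivative
      F t ** (mat (liouville_factor F t) ** (J2 ** X (1 - t)))) (at t within {0..1})"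
    by simp
qed

lemma reversible_symmetric_linear_ode_monodromy_symmetric:
  fixes F X :: "real \<Rightarrow> complex^2^2"
  assumes F: "continuous_on {0..1} F"
    and sym: "\<And>t. t \<in> {0..1} \<Longrightarrow> transpose (F t) = F t"
    and rev: "\<And>t. t \<in> {0..1} \<Longrightarrow> F (1 - t) = F t"
    and X: "solves_linear_ode F X" and X0: "X 0 = mat 1"
  shows "transpose (X 1) = X 1"
proof (rule symmetric2_if_mult_J2_eq)
  define Y where "Y t = mat (liouville_factor F t) ** (J2 ** X (1 - t))" for t
  have Y: "solves_linear_ode F Y"
    unfolding Y_def by (rule solves_linear_ode_reflect[OF F sym rev X])
  have "Y 1 = X 1 ** (J2 ** X 1)"
    by (rule linear_ode_unique[OF F Y solves_linear_ode_mult_right[OF X]]) (simp_all add: Y_def X0)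
  moreover have "det (X 1) = liouville_factor F 1"
    using det_solves_linear_ode2[OF F X, of 1] by (simp add: X0)
  ultimately show "X 1 ** (J2 ** X 1) = mat (det (X 1)) ** J2"
    by (simp add: Y_def X0)
qed

section \<open>The monodromy matrix\<close>

definition circle_coeff :: "complex \<Rightarrow> complex \<Rightarrow> complex \<Rightarrow> real \<Rightarrow> complex^2^2" where
  "circle_coeff B A r t = mat (2 * pi * \<i> * unit_circle t) ** lin_matrix B A r (unit_circle t)"

lemma is_fund_sol_iff:
  "is_fund_sol B A r X \<longleftrightarrow> X 0 = mat 1 \<and> solves_linear_ode (circle_coeff B A r) X"
  by (simp add: is_fund_sol_def solves_linear_ode_def circle_coeff_def)

lemma unit_circle_nonzero [simp]: "unit_circle t \<noteq> 0"
  by (simp add: unit_circle_def)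

lemma unit_circle_reflect: "unit_circle (1 - t) = inverse (unit_circle t)"
proof -
  have "unit_circle (1 - t) = exp (2 * pi * \<i>) / unit_circle t"
    unfolding unit_circle_def by (simp add: right_diff_distrib exp_diff)
  then show ?thesis by (simp add: field_simps)
qed

lemma circle_coeff_entries:
  fixes B A r :: complex and t :: real
  defines "z \<equiv> unit_circle t"
  shows "circle_coeff B A r t $ 1 $ 1 = 2 * pi * \<i> * (l_par B r + mu_par A r * (z + inverse z))"
    and "circle_coeff B A r t $ 1 $ 2 = 2 * pi * r"
    and "circle_coeff B A r t $ 2 $ 1 = 2 * pi * r"
    and "circle_coeff B A r t $ 2 $ 2 = 0"
  unfolding circle_coeff_def lin_matrix_def Let_def omega_par_def z_def matrix2_mult_entry
  by (simp_all add: field_simps power2_eq_square)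

lemma circle_coeff_symmetric: "transpose (circle_coeff B A r t) = circle_coeff B A r t"
  by (simp add: transpose2_eq_iff circle_coeff_entries)

lemma circle_coeff_reflect: "circle_coeff B A r (1 - t) = circle_coeff B A r t"
  by (rule matrix2_eqI) (simp_all add: circle_coeff_entries unit_circle_reflect add.commute)

lemma continuous_on_circle_coeff: "continuous_on S (circle_coeff B A r)"
proof -
  have "continuous_on S unit_circle"
    unfolding unit_circle_def by (intro continuous_intros)
  then have "\<forall>i j. continuous_on S (\<lambda>t. circle_coeff B A r t $ i $ j)"
    unfolding forall_2 circle_coeff_entries by (auto intro!: continuous_intros)
  then have "continuous_on S (\<lambda>t. \<chi> i j. circle_coeff B A r t $ i $ j)"
    by (intro continuous_on_vec_lambda) blast
  then show ?thesis by simp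
qed

lemma fund_sol_exists: "\<exists>X. is_fund_sol B A r X"
  using linear_ode_fundamental_solution_exists[OF continuous_on_circle_coeff]
  by (simp add: is_fund_sol_iff)

lemma monodromy_matrix_eq:
  assumes "is_fund_sol B A r X"
  shows "monodromy_matrix B A r = X 1"
  unfolding monodromy_matrix_def
proof (rule the_equality)
  fix M assume "\<exists>Y. is_fund_sol B A r Y \<and> Y 1 = M"
  then show "M = X 1"
    using assms linear_ode_unique[OF continuous_on_circle_coeff, of B A r _ X 1]
    by (auto simp: is_fund_sol_iff)
qed (use assms in blast)

lemma monodromy_matrix_symmetric:
  "transpose (monodromy_matrix B A r) = monodromy_matrix B A r"
proof -
  obtain X where X: "is_fund_sol B A r X" using fund_sol_exists by blast
  then show ?thesis
    unfolding monodromy_matrix_eq[OF X] is_fund_sol_iff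
    using reversible_symmetric_linear_ode_monodromy_symmetric[OF continuous_on_circle_coeff
        circle_coeff_symmetric circle_coeff_reflect] by blast
qed

lemma det_monodromy_matrix_nonzero: "det (monodromy_matrix B A r) \<noteq> 0"
proof -
  obtain X where X: "is_fund_sol B A r X" using fund_sol_exists by blast
  then show ?thesis
    unfolding monodromy_matrix_eq[OF X] is_fund_sol_iff
    using det_solves_linear_ode2[OF continuous_on_circle_coeff, of B A r X 1]
    by (auto simp: liouville_factor_nonzero)
qed

section \<open>Fixed points of symmetric Moebius transformations\<close>

lemma moebius_app_None_fixed_iff: "moebius_app N None = None \<longleftrightarrow> N$2$1 = 0"
  by (simp add: moebius_app_def Let_def)

lemma moebius_app_Some_fixed_iff:
  fixes N :: "complex^2^2"
  assumes "det N \<noteq> 0"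
  shows "moebius_app N (Some z) = Some z \<longleftrightarrow> N$2$1 * z^2 + (N$2$2 - N$1$1) * z - N$1$2 = 0"
proof -
  have "moebius_app N (Some z) = Some z \<longleftrightarrow>
      N$2$1 * z + N$2$2 \<noteq> 0 \<and> N$1$1 * z + N$1$2 = z * (N$2$1 * z + N$2$2)"
    by (auto simp: moebius_app_def Let_def divide_eq_eq)
  also have "\<dots> \<longleftrightarrow> N$2$1 * z^2 + (N$2$2 - N$1$1) * z - N$1$2 = 0" (is "_ \<longleftrightarrow> ?quadratic")
  proof
    assume ?quadratic
    then have eq: "N$1$1 * z + N$1$2 = z * (N$2$1 * z + N$2$2)" by algebra
    moreover have "N$2$1 * z + N$2$2 \<noteq> 0"
    proof
      assume "N$2$1 * z + N$2$2 = 0"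
      with eq have "det N = 0" unfolding det_2 by algebra
      with assms show False by contradiction
    qed
    ultimately show "N$2$1 * z + N$2$2 \<noteq> 0 \<and> N$1$1 * z + N$1$2 = z * (N$2$1 * z + N$2$2)" by blast
  qed algebra
  finally show ?thesis .
qed

lemma moebius_app_mat: "c \<noteq> 0 \<Longrightarrow> moebius_app (mat c) = id"
  by (auto simp: moebius_app_def split: option.split)

lemma symmetric_moebius_fixes_imag_unit_imp_parabolic_or_id:
  fixes N :: "complex^2^2"
  assumes sym: "transpose N = N" and det: "det N \<noteq> 0" and w: "w^2 = -1"
    and fixed: "moebius_app N (Some w) = Some w"
  shows "parabolic (moebius_app N) \<or> moebius_app N = id"
proof -
  have "N$2$1 * w^2 + (N$2$2 - N$1$1) * w - N$1$2 = 0"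
    using fixed moebius_app_Some_fixed_iff[OF det] by blast
  then have quadratic: "N$2$1 * z^2 + (N$2$2 - N$1$1) * z - N$1$2 = N$1$2 * (z - w)^2" for z
    using sym w unfolding transpose2_eq_iff by algebra
  show ?thesis
  proof (cases "N$1$2 = 0")
    case True
    then have "N = mat (N$1$1)"
      using quadratic[of 0] quadratic[of 1] sym
      by (intro matrix2_eqI) (auto simp: transpose2_eq_iff)
    moreover have "N$1$1 \<noteq> 0" using det True sym by (auto simp: det_2 transpose2_eq_iff)
    ultimately show ?thesis using moebius_app_mat by metis
  next
    case False
    have not_None: "moebius_app N None \<noteq> None"
      using False sym by (simp add: moebius_app_None_fixed_iff transpose2_eq_iff)
    have "moebius_app N p = p \<longleftrightarrow> p = Some w" for p
      using False by (cases p) (auto simp: not_None moebius_app_Some_fixed_iff[OF det] quadratic)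
    then show ?thesis using not_None by (auto simp: parabolic_def)
  qed
qed

lemma symmetric_moebius_parabolic_imp_fixes_imag_unit:
  fixes N :: "complex^2^2"
  assumes sym: "transpose N = N" and det: "det N \<noteq> 0" and par: "parabolic (moebius_app N)"
  shows "moebius_app N (Some \<i>) = Some \<i> \<or> moebius_app N (Some (-\<i>)) = Some (-\<i>)"
proof -
  obtain p where p: "moebius_app N p = p" and unique: "\<And>q. moebius_app N q = q \<Longrightarrow> q = p"
    using par unfolding parabolic_def by blast
  have fixed_iff: "moebius_app N (Some z) = Some z \<longleftrightarrow> N$1$2 * z^2 + (N$2$2 - N$1$1) * z - N$1$2 = 0"
    for z
    using moebius_app_Some_fixed_iff[OF det] sym by (simp add: transpose2_eq_iff)
  have "N$1$2 \<noteq> 0"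
  proof
    assume "N$1$2 = 0"
    then have "moebius_app N None = None" and "moebius_app N (Some 0) = Some 0"
      using sym by (simp_all add: moebius_app_None_fixed_iff transpose2_eq_iff fixed_iff)
    then show False using unique by blast
  qed
  then obtain z where z: "p = Some z"
    using p sym by (cases p) (auto simp: moebius_app_None_fixed_iff transpose2_eq_iff)
  have q: "N$1$2 * z^2 + (N$2$2 - N$1$1) * z - N$1$2 = 0" using p z fixed_iff by simp
  then have "z \<noteq> 0" using \<open>N$1$2 \<noteq> 0\<close> by auto
  \<comment> \<open>the fixed-point quadratic of a symmetric matrix is invariant under \<open>z \<mapsto> -1/z\<close>\<close>
  then have "N$1$2 * (- 1 / z)^2 + (N$2$2 - N$1$1) * (- 1 / z) - N$1$2
      = - (N$1$2 * z^2 + (N$2$2 - N$1$1) * z - N$1$2) / z^2"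
    by (simp add: field_simps power2_eq_square)
  then have "moebius_app N (Some (- 1 / z)) = Some (- 1 / z)"
    unfolding fixed_iff q by simp
  then have "- 1 / z = z" using unique z by blast
  then have "(z - \<i>) * (z + \<i>) = 0" using \<open>z \<noteq> 0\<close> by (simp add: field_simps)
  then have "z = \<i> \<or> z = - \<i>" by (simp add: eq_neg_iff_add_eq_0)
  then show ?thesis using p z by auto
qed

lemma Mon_parabolic_or_id_if_fixes_imag_unit:
  assumes "w^2 = -1" and "Mon B A r (Some w) = Some w"
  shows "parabolic (Mon B A r) \<or> Mon B A r = id"
  using symmetric_moebius_fixes_imag_unit_imp_parabolic_or_id[OF monodromy_matrix_symmetric
      det_monodromy_matrix_nonzero assms[unfolded Mon_def]]
  unfolding Mon_def .

lemma Mon_fixes_imag_unit_if_parabolic_or_id: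
  assumes "parabolic (Mon B A r) \<or> Mon B A r = id"
  shows "Mon B A r (Some \<i>) = Some \<i> \<or> Mon B A r (Some (-\<i>)) = Some (-\<i>)"
  using assms symmetric_moebius_parabolic_imp_fixes_imag_unit[OF monodromy_matrix_symmetric
      det_monodromy_matrix_nonzero]
  unfolding Mon_def by auto

theorem proposition5p5:
  shows "(\<forall>s \<in> {1, -1::complex}. Sigma_pm s =
           {(B, A, r). r \<noteq> 0 \<and> (parabolic (Mon B A r) \<or> Mon B A r = id) \<and>
                       Mon B A r (Some (s * \<i>)) = Some (s * \<i>)})
       \<and> (\<forall>B A r. r \<noteq> 0 \<longrightarrow> (parabolic (Mon B A r) \<or> Mon B A r = id) \<longrightarrow>
                  (B, A, r) \<in> Sigma_pm 1 \<union> Sigma_pm (-1))"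
proof (intro conjI ballI allI impI)
  fix s :: complex assume "s \<in> {1, -1}"
  then have "(s * \<i>)^2 = -1" by (auto simp: power2_eq_square)
  then show "Sigma_pm s = {(B, A, r). r \<noteq> 0 \<and> (parabolic (Mon B A r) \<or> Mon B A r = id) \<and>
                       Mon B A r (Some (s * \<i>)) = Some (s * \<i>)}"
    unfolding Sigma_pm_def using Mon_parabolic_or_id_if_fixes_imag_unit by blast
next
  fix B A r :: complex assume "r \<noteq> 0" and "parabolic (Mon B A r) \<or> Mon B A r = id"
  then show "(B, A, r) \<in> Sigma_pm 1 \<union> Sigma_pm (-1)"
    unfolding Sigma_pm_def using Mon_fixes_imag_unit_if_parabolic_or_id by auto
qed

end
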